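(* Let $f:(0,\infty)\to\mathbb R$ be convex with $f(1)=0$, and let $\bar f(x):=\sup_{t>0}\{tx-f(t)\}$, $x\in\mathbb R$, be its convex conjugate. Let $\rho>1$, $n\ge2$, $\mathcal A_n=\{1,\dots,n\}$, and $u_f(n,\rho):=\max_{Q\in\mathcal P_n(\rho)}D_f(Q\|U_n)$. Then: (a) for every $P\in\mathcal P_n(\rho)$, $X\sim P$, and every $g:\mathcal A_n\to\mathbb R$: $\mathbb E[g(X)]\le u_f(n,\rho)+\frac1n\sum_{i=1}^n\bar f(g(i))$; (b) there exists $P\in\mathcal P_n(\rho)$ such that for every $\varepsilon>0$ there is $g_\varepsilon:\mathcal A_n\to\mathbb R$ with $\mathbb E[g_\varepsilon(X)]\ge u_f(n,\rho)+\frac1n\sum_{i=1}^n\bar f(g_\varepsilon(i))-\varepsilon$, where $X\sim P$.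
   Context: $\mathcal P_n(\rho)$: probability mass functions on $\mathcal A_n$ with all masses positive and max/min mass ratio at most $\rho$; $U_n$ uniform on $\mathcal A_n$; $D_f(P\|Q)=\sum_xQ(x)f(P(x)/Q(x))$ (conventions $0f(0/0)=0$, $f(0)=\lim_{t\to0^+}f(t)$). *)

theory Defs
  imports "HOL-Analysis.Analysis"
begin

text \<open>Alphabet A_n = {1..n}; distributions on A_n are functions nat => real,
  vanishing outside {1..n}.\<close>

definition Pn :: "nat \<Rightarrow> real \<Rightarrow> (nat \<Rightarrow> real) set" where
  "Pn n \<rho> = {P. (\<forall>i\<in>{1..n}. P i > 0) \<and> (\<forall>i. i \<notin> {1..n} \<longrightarrow> P i = 0)
     \<and> (\<Sum>i=1..n. P i) = 1 \<and> (\<forall>i\<in>{1..n}. \<forall>j\<in>{1..n}. P i \<le> \<rho> * P j)}"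

definition unif :: "nat \<Rightarrow> nat \<Rightarrow> real" where
  "unif n i = (if i \<in> {1..n} then 1 / real n else 0)"

text \<open>f(0) convention: limit from the right (f is only given on (0,inf)).\<close>
definition fext :: "(real \<Rightarrow> real) \<Rightarrow> real \<Rightarrow> real" where
  "fext f t = (if t > 0 then f t else Lim (at_right 0) f)"

text \<open>f-divergence D_f(P||Q) on A_n, for a reference Q with full support
  (the only case used: Q = U_n); then the term 0 f(0/0) never occurs.\<close>
definition Df :: "(real \<Rightarrow> real) \<Rightarrow> nat \<Rightarrow> (nat \<Rightarrow> real) \<Rightarrow> (nat \<Rightarrow> real) \<Rightarrow> real" where
  "Df f n P Q = (\<Sum>i=1..n. Q i * fext f (P i / Q i))"

definition uf :: "(real \<Rightarrow> real) \<Rightarrow> nat \<Rightarrow> real \<Rightarrow> real" where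
  "uf f n \<rho> = (SUP Q\<in>Pn n \<rho>. Df f n Q (unif n))"

definition fconj :: "(real \<Rightarrow> real) \<Rightarrow> real \<Rightarrow> ereal" where
  "fconj f x = (SUP t\<in>{0<..}. ereal (t * x - f t))"

end

theory Submission
  imports Defs
begin

text \<open>
  Fenchel--Young gives \<open>t x \<le> f t + f\<^sup>*(x)\<close>; applied with \<open>t = n P(i)\<close> and averaged over
  \<open>i\<close>, it bounds \<open>E[g(X)]\<close> by \<open>D\<^sub>f(P\<parallel>U\<^sub>n) + (1/n)\<Sigma>\<^sub>i f\<^sup>*(g(i))\<close>, hence (a) since the
  divergence is at most \<open>u\<^sub>f(n,\<rho>)\<close>. Choosing \<open>g(i)\<close> to be a subgradient of \<open>f\<close> at \<open>n P(i)\<close>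
  makes each Fenchel--Young inequality an equality, so (b) holds, even with \<open>\<epsilon> = 0\<close>, for any
  \<open>P\<close> attaining \<open>u\<^sub>f(n,\<rho>)\<close>; such a \<open>P\<close> exists because \<open>\<P>\<^sub>n(\<rho>)\<close> is compact and
  \<open>Q \<mapsto> D\<^sub>f(Q\<parallel>U\<^sub>n)\<close> is continuous on it.
\<close>

lemma convex_on_real_subgradient:
  fixes f :: "real \<Rightarrow> real"
  assumes cv: "convex_on I f" and x: "x \<in> interior I"
  obtains c where "\<And>t. t \<in> I \<Longrightarrow> f x + c * (t - x) \<le> f t"
proof -
  obtain e where e: "e > 0" "ball x e \<subseteq> I"
    using x mem_interior by blast
  have left: "x - e / 2 \<in> I" and right: "x + e / 2 \<in> I"
    using e by (auto simp: dist_real_def)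
  have slope_mono: "(f x - f s) / (x - s) \<le> (f y - f x) / (y - x)"
    if "s \<in> I" "y \<in> I" "s < x" "x < y" for s y
  proof -
    have "(f s - f x) / (s - x) \<le> (f s - f y) / (s - y)"
         "(f s - f y) / (s - y) \<le> (f x - f y) / (x - y)"
      using convex_on_slope_le[OF cv, of s y x] that by auto
    moreover have "(f x - f s) / (x - s) = (f s - f x) / (s - x)"
                  "(f y - f x) / (y - x) = (f x - f y) / (x - y)"
      by (metis minus_diff_eq minus_divide_divide)+
    ultimately show ?thesis by linarith
  qed
  define S where "S = (\<lambda>s. (f x - f s) / (x - s)) ` {s\<in>I. s < x}"
  have S_ne: "S \<noteq> {}"
    using left e unfolding S_def by force
  have S_bdd: "bdd_above S"
    unfolding S_def using slope_mono[OF _ right] e by (intro bdd_aboveI) force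
  have "f x + Sup S * (t - x) \<le> f t" if t: "t \<in> I" for t
  proof (cases t x rule: linorder_cases)
    case less
    have "(f x - f t) / (x - t) \<le> Sup S"
      by (rule cSup_upper[OF _ S_bdd]) (use less t S_def in auto)
    then show ?thesis using less by (simp add: divide_le_eq algebra_simps)
  next
    case greater
    have "Sup S \<le> (f t - f x) / (t - x)"
      by (rule cSup_least[OF S_ne]) (use slope_mono t greater S_def in auto)
    then show ?thesis using greater by (simp add: le_divide_eq algebra_simps)
  qed simp
  then show thesis using that by blast
qed

lemma fconj_ge:
  assumes "t > 0"
  shows "ereal (t * x - f t) \<le> fconj f x"
  unfolding fconj_def by (rule SUP_upper) (use assms in auto)

lemma fconj_eq_at_subgradient:
  assumes "x > 0" and "\<And>t. t > 0 \<Longrightarrow> f x + c * (t - x) \<le> f t"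
  shows "fconj f c = ereal (x * c - f x)"
proof (rule antisym)
  show "fconj f c \<le> ereal (x * c - f x)"
    unfolding fconj_def using assms(2) by (intro SUP_least) (auto simp: algebra_simps)
  show "ereal (x * c - f x) \<le> fconj f c"
    by (rule fconj_ge) (use assms in auto)
qed

lemma Pn_pos: "P \<in> Pn n \<rho> \<Longrightarrow> i \<in> {1..n} \<Longrightarrow> P i > 0"
  unfolding Pn_def by auto

lemma Pn_le_one:
  assumes "P \<in> Pn n \<rho>" "i \<in> {1..n}"
  shows "P i \<le> 1"
proof -
  have "P i \<le> (\<Sum>j=1..n. P j)"
    using assms by (intro member_le_sum) (auto simp: Pn_def less_imp_le)
  then show ?thesis using assms unfolding Pn_def by auto
qed

lemma unif_in_Pn:
  assumes "\<rho> \<ge> 1" "n > 0"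
  shows "unif n \<in> Pn n \<rho>"
  using assms by (auto simp: Pn_def unif_def divide_right_mono)

text \<open>For \<open>\<rho> > 1\<close> positivity follows from the ratio bound and the normalisation, which
  leaves only closed conditions.\<close>
lemma Pn_nonstrict:
  assumes "\<rho> > 1"
  shows "Pn n \<rho> = {P. (\<forall>i. i \<notin> {1..n} \<longrightarrow> P i = 0) \<and> (\<Sum>i=1..n. P i) = 1
                     \<and> (\<forall>i\<in>{1..n}. \<forall>j\<in>{1..n}. P i \<le> \<rho> * P j)}" (is "_ = ?C")
proof
  show "Pn n \<rho> \<subseteq> ?C" unfolding Pn_def by auto
  show "?C \<subseteq> Pn n \<rho>"
  proof
    fix P assume P: "P \<in> ?C"
    have "P i > 0" if i: "i \<in> {1..n}" for i
    proof (rule ccontr)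
      assume "\<not> P i > 0"
      then have "\<rho> * P i \<le> 0" using assms by (intro mult_nonneg_nonpos) auto
      then have "\<forall>j\<in>{1..n}. P j \<le> 0" using P i by force
      then have "(\<Sum>j=1..n. P j) \<le> 0" by (intro sum_nonpos) auto
      then show False using P by auto
    qed
    then show "P \<in> Pn n \<rho>" using P unfolding Pn_def by auto
  qed
qed

lemma compact_Pn:
  assumes "\<rho> > 1"
  shows "compact (Pn n \<rho>)"
proof -
  define K where "K = PiE UNIV (\<lambda>i::nat. if i \<in> {1..n} then {0..1::real} else {0})"
  have "compactin (product_topology (\<lambda>i. euclidean) UNIV) K"
    unfolding K_def by (subst compactin_PiE) auto
  then have K: "compact K" by (simp add: euclidean_product_topology)
  define C where "C = (\<Inter>i\<in>- {1..n}. {P::nat\<Rightarrow>real. P i = 0}) \<inter> {P. (\<Sum>i=1..n. P i) = 1}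
       \<inter> (\<Inter>i\<in>{1..n}. \<Inter>j\<in>{1..n}. {P. P i \<le> \<rho> * P j})"
  have C: "closed C" unfolding C_def
    by (intro closed_Int closed_INT ballI closed_Collect_eq closed_Collect_le continuous_intros
        continuous_on_product_coordinates)
  have "P \<in> K" if P: "P \<in> Pn n \<rho>" for P
    unfolding K_def using Pn_pos[OF P] Pn_le_one[OF P] P by (auto simp: Pn_def less_imp_le)
  then have "Pn n \<rho> = K \<inter> C"
    unfolding Pn_nonstrict[OF assms] C_def by auto
  then show ?thesis using compact_Int_closed[OF K C] by simp
qed

lemma Df_unif:
  assumes "n > 0" and "\<And>i. i \<in> {1..n} \<Longrightarrow> Q i > 0"
  shows "Df f n Q (unif n) = (\<Sum>i=1..n. f (real n * Q i)) / real n"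
  unfolding Df_def unif_def sum_divide_distrib
  using assms by (intro sum.cong) (auto simp: fext_def mult.commute)

lemma continuous_on_Df_unif:
  assumes "convex_on {0<..} f" and "n > 0"
  shows "continuous_on (Pn n \<rho>) (\<lambda>Q. Df f n Q (unif n))"
proof -
  have f: "continuous_on {0<..} f"
    using assms(1) by (intro convex_on_continuous) auto
  have "continuous_on (Pn n \<rho>) (\<lambda>Q. f (real n * Q i))" if i: "i \<in> {1..n}" for i
  proof (rule continuous_on_compose2[OF f])
    show "continuous_on (Pn n \<rho>) (\<lambda>Q. real n * Q i)"
      by (intro continuous_intros continuous_on_subset[OF continuous_on_product_coordinates]) auto
    show "(\<lambda>Q. real n * Q i) ` Pn n \<rho> \<subseteq> {0<..}"
      using i assms(2) Pn_pos by auto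
  qed
  then have "continuous_on (Pn n \<rho>) (\<lambda>Q. (\<Sum>i=1..n. f (real n * Q i)) / real n)"
    using assms(2) by (intro continuous_intros) auto
  moreover have "Df f n Q (unif n) = (\<Sum>i=1..n. f (real n * Q i)) / real n"
    if "Q \<in> Pn n \<rho>" for Q
    by (rule Df_unif[where Q=Q, OF assms(2) Pn_pos[OF that]])
  ultimately show ?thesis by (simp cong: continuous_on_cong)
qed

lemma uf_attained:
  assumes "convex_on {0<..} f" and "\<rho> > 1" and "n > 0"
  obtains P where "P \<in> Pn n \<rho>" and "uf f n \<rho> = Df f n P (unif n)"
    and "\<And>Q. Q \<in> Pn n \<rho> \<Longrightarrow> Df f n Q (unif n) \<le> uf f n \<rho>"
proof -
  obtain P where P: "P \<in> Pn n \<rho>"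
    and max: "\<And>Q. Q \<in> Pn n \<rho> \<Longrightarrow> Df f n Q (unif n) \<le> Df f n P (unif n)"
    using continuous_attains_sup[OF compact_Pn[OF assms(2)] _ continuous_on_Df_unif[OF assms(1,3)]]
      unif_in_Pn[of \<rho> n] assms(2,3) by fastforce
  have "uf f n \<rho> = Df f n P (unif n)"
    unfolding uf_def using P max by (intro cSup_eq_maximum) auto
  with P max that show thesis by simp
qed

lemma Df_unif_average_form:
  assumes "n > 0" and "\<And>i. i \<in> {1..n} \<Longrightarrow> P i > 0"
  shows "(\<Sum>i=1..n. P i * g i)
           = Df f n P (unif n) + (1 / real n) * (\<Sum>i=1..n. real n * P i * g i - f (real n * P i))"
  using assms Df_unif[OF assms, where f=f]
  by (simp add: sum_subtractf sum_distrib_left sum_divide_distrib field_simps)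

lemma Df_unif_fenchel_young:
  assumes "n > 0" and "\<And>i. i \<in> {1..n} \<Longrightarrow> P i > 0"
  shows "ereal (\<Sum>i=1..n. P i * g i)
           \<le> ereal (Df f n P (unif n)) + ereal (1 / real n) * (\<Sum>i=1..n. fconj f (g i))"
proof -
  have "ereal (\<Sum>i=1..n. real n * P i * g i - f (real n * P i)) \<le> (\<Sum>i=1..n. fconj f (g i))"
    unfolding sum_ereal[symmetric] using assms by (intro sum_mono fconj_ge) auto
  then have young: "ereal (1 / real n) * ereal (\<Sum>i=1..n. real n * P i * g i - f (real n * P i))
                      \<le> ereal (1 / real n) * (\<Sum>i=1..n. fconj f (g i))"
    by (rule ereal_mult_left_mono) simp
  have "ereal (\<Sum>i=1..n. P i * g i) = ereal (Df f n P (unif n))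
          + ereal (1 / real n) * ereal (\<Sum>i=1..n. real n * P i * g i - f (real n * P i))"
    using Df_unif_average_form[OF assms, where f=f and g=g] by simp
  also have "\<dots> \<le> ereal (Df f n P (unif n)) + ereal (1 / real n) * (\<Sum>i=1..n. fconj f (g i))"
    using young by (rule add_left_mono)
  finally show ?thesis .
qed

lemma Df_unif_fenchel_young_tight:
  assumes "convex_on {0<..} f" and "n > 0" and P: "\<And>i. i \<in> {1..n} \<Longrightarrow> P i > 0"
  obtains g where "ereal (\<Sum>i=1..n. P i * g i)
                     = ereal (Df f n P (unif n)) + ereal (1 / real n) * (\<Sum>i=1..n. fconj f (g i))"
proof -
  have pos: "real n * P i > 0" if "i \<in> {1..n}" for i
    using assms(2) P[OF that] by simp
  have "\<exists>c. \<forall>t>0. f (real n * P i) + c * (t - real n * P i) \<le> f t" if "i \<in> {1..n}" for i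
    using convex_on_real_subgradient[OF assms(1), of "real n * P i"] pos[OF that]
    by (metis greaterThan_iff interior_open open_greaterThan)
  then obtain g where g: "\<And>i t. i \<in> {1..n} \<Longrightarrow> t > 0
                            \<Longrightarrow> f (real n * P i) + g i * (t - real n * P i) \<le> f t"
    by metis
  have fconj_sum: "(\<Sum>i=1..n. fconj f (g i)) = ereal (\<Sum>i=1..n. real n * P i * g i - f (real n * P i))"
    unfolding sum_ereal[symmetric] using pos g by (intro sum.cong fconj_eq_at_subgradient) auto
  have "ereal (\<Sum>i=1..n. P i * g i)
          = ereal (Df f n P (unif n)) + ereal (1 / real n) * (\<Sum>i=1..n. fconj f (g i))"
    using Df_unif_average_form[where P=P and f=f and g=g, OF assms(2,3)]
    unfolding fconj_sum by simp
  then show thesis by (rule that)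
qed

theorem theorem10:
  fixes f :: "real \<Rightarrow> real" and \<rho> :: real and n :: nat
  assumes "convex_on {0<..} f" and "f 1 = 0" and "\<rho> > 1" and "n \<ge> 2"
  shows "(\<forall>P\<in>Pn n \<rho>. \<forall>g :: nat \<Rightarrow> real.
            ereal (\<Sum>i=1..n. P i * g i)
              \<le> ereal (uf f n \<rho>) + ereal (1 / real n) * (\<Sum>i=1..n. fconj f (g i)))
       \<and> (\<exists>P\<in>Pn n \<rho>. \<forall>\<epsilon>>0. \<exists>g :: nat \<Rightarrow> real.
            ereal (\<Sum>i=1..n. P i * g i)
              \<ge> ereal (uf f n \<rho>) + ereal (1 / real n) * (\<Sum>i=1..n. fconj f (g i)) - ereal \<epsilon>)"
proof -
  have n: "n > 0" using assms(4) by simp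
  obtain P0 where P0: "P0 \<in> Pn n \<rho>" and uf_eq: "uf f n \<rho> = Df f n P0 (unif n)"
    and uf_ge: "\<And>Q. Q \<in> Pn n \<rho> \<Longrightarrow> Df f n Q (unif n) \<le> uf f n \<rho>"
    using uf_attained[OF assms(1,3) n] by blast
  have "ereal (\<Sum>i=1..n. P i * g i)
          \<le> ereal (uf f n \<rho>) + ereal (1 / real n) * (\<Sum>i=1..n. fconj f (g i))"
    if P: "P \<in> Pn n \<rho>" for P and g :: "nat \<Rightarrow> real"
  proof -
    have "ereal (\<Sum>i=1..n. P i * g i)
            \<le> ereal (Df f n P (unif n)) + ereal (1 / real n) * (\<Sum>i=1..n. fconj f (g i))"
      by (rule Df_unif_fenchel_young[where P=P, OF n Pn_pos[OF P]])
    also have "\<dots> \<le> ereal (uf f n \<rho>) + ereal (1 / real n) * (\<Sum>i=1..n. fconj f (g i))"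
      using uf_ge[OF P] by (intro add_right_mono) simp
    finally show ?thesis .
  qed
  moreover obtain g where "ereal (\<Sum>i=1..n. P0 i * g i)
      = ereal (uf f n \<rho>) + ereal (1 / real n) * (\<Sum>i=1..n. fconj f (g i))"
    using Df_unif_fenchel_young_tight[where P=P0, OF assms(1) n Pn_pos[OF P0]] uf_eq by metis
  then have "ereal (\<Sum>i=1..n. P0 i * g i)
      \<ge> ereal (uf f n \<rho>) + ereal (1 / real n) * (\<Sum>i=1..n. fconj f (g i)) - ereal \<epsilon>"
    if "\<epsilon> > 0" for \<epsilon>
    using that by (simp add: ereal_diff_le_self)
  ultimately show ?thesis using P0 by blast
qed

end
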